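(* Let $G$ be a connected graph in $\mathcal{C}$ and $C$ an induced $C_5$ in $G$ with vertices $0,\dots,4$ in cyclic order. If $R\neq\emptyset$, then $|X_i|\le 2$ for every $i$.
   Context: $\mathcal{C}=\mathrm{Free}(\text{claw}, 4K_1, \text{5-wheel}, C_5\text{-twin}, P_5\text{-twin}, K_5-e)$, where $\mathrm{Free}(L)$ is the class of graphs with no induced subgraph isomorphic to a member of $L$; the claw is $K_{1,3}$; $4K_1$ is the edgeless graph on 4 vertices; the 5-wheel is $C_5$ plus a vertex adjacent to all five cycle vertices; the $C_5$-twin is $C_5$ plus a new vertex adjacent to one cycle vertex $v$ and both cycle-neighbours of $v$; the $P_5$-twin is a path $p_1p_2p_3p_4p_5$ plus a new vertex adjacent to exactly $p_2,p_3,p_4$; $K_5-e$ is $K_5$ minus one edge. Given an induced cycle $C$ of length 5 with vertices $0,\dots,4$ in cyclic order (indices taken mod 5): $R$ is the set of vertices outside $C$ with no neighbour in $C$; $X_j$ is the set of vertices outside $C$ whose neighbourhood in $C$ is exactly $\{j,j+1\}$; $Y_j$ is the set of vertices outside $C$ whose neighbourhood in $C$ is exactly $\{j,j+1,j+2,j+3\}$; $X=\bigcup_j X_j$, $Y=\bigcup_j Y_j$. *)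

theory Defs
  imports Main
begin

definition graph :: "'a set \<Rightarrow> ('a \<Rightarrow> 'a \<Rightarrow> bool) \<Rightarrow> bool" where
  "graph V E \<longleftrightarrow> finite V \<and> (\<forall>u v. E u v \<longrightarrow> u \<in> V \<and> v \<in> V)
     \<and> (\<forall>u v. E u v \<longrightarrow> E v u) \<and> (\<forall>v. \<not> E v v)"

definition connected_graph :: "'a set \<Rightarrow> ('a \<Rightarrow> 'a \<Rightarrow> bool) \<Rightarrow> bool" where
  "connected_graph V E \<longleftrightarrow> (\<forall>u\<in>V. \<forall>v\<in>V. (\<lambda>x y. x \<in> V \<and> y \<in> V \<and> E x y)\<^sup>*\<^sup>* u v)"

definition has_induced :: "'a set \<Rightarrow> ('a \<Rightarrow> 'a \<Rightarrow> bool) \<Rightarrow> nat \<Rightarrow> (nat \<Rightarrow> nat \<Rightarrow> bool) \<Rightarrow> bool" where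
  "has_induced V E n H \<longleftrightarrow> (\<exists>f. inj_on f {..<n} \<and> f ` {..<n} \<subseteq> V \<and>
      (\<forall>i<n. \<forall>j<n. E (f i) (f j) \<longleftrightarrow> H i j))"

definition cyc5 :: "nat \<Rightarrow> nat \<Rightarrow> bool" where
  "cyc5 i j \<longleftrightarrow> i < 5 \<and> j < 5 \<and> (j = (i + 1) mod 5 \<or> i = (j + 1) mod 5)"

definition claw :: "nat \<Rightarrow> nat \<Rightarrow> bool" where
  "claw i j \<longleftrightarrow> i \<noteq> j \<and> (i = 0 \<or> j = 0)"

definition fourK1 :: "nat \<Rightarrow> nat \<Rightarrow> bool" where
  "fourK1 i j \<longleftrightarrow> False"

definition wheel5 :: "nat \<Rightarrow> nat \<Rightarrow> bool" where
  "wheel5 i j \<longleftrightarrow> cyc5 i j \<or> (i = 5 \<and> j < 5) \<or> (j = 5 \<and> i < 5)"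

definition c5twin :: "nat \<Rightarrow> nat \<Rightarrow> bool" where
  "c5twin i j \<longleftrightarrow> cyc5 i j \<or> (i = 5 \<and> j \<in> {0,1,4}) \<or> (j = 5 \<and> i \<in> {0,1,4})"

definition p5twin :: "nat \<Rightarrow> nat \<Rightarrow> bool" where
  "p5twin i j \<longleftrightarrow> (i < 5 \<and> j < 5 \<and> (j = i + 1 \<or> i = j + 1))
     \<or> (i = 5 \<and> j \<in> {1,2,3}) \<or> (j = 5 \<and> i \<in> {1,2,3})"

definition k5e :: "nat \<Rightarrow> nat \<Rightarrow> bool" where
  "k5e i j \<longleftrightarrow> i \<noteq> j \<and> {i,j} \<noteq> {0,1}"

definition in_class_C :: "'a set \<Rightarrow> ('a \<Rightarrow> 'a \<Rightarrow> bool) \<Rightarrow> bool" where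
  "in_class_C V E \<longleftrightarrow> \<not> has_induced V E 4 claw \<and> \<not> has_induced V E 4 fourK1
     \<and> \<not> has_induced V E 6 wheel5 \<and> \<not> has_induced V E 6 c5twin
     \<and> \<not> has_induced V E 6 p5twin \<and> \<not> has_induced V E 5 k5e"

definition induced_C5 :: "'a set \<Rightarrow> ('a \<Rightarrow> 'a \<Rightarrow> bool) \<Rightarrow> (nat \<Rightarrow> 'a) \<Rightarrow> bool" where
  "induced_C5 V E c \<longleftrightarrow> inj_on c {..<5} \<and> c ` {..<5} \<subseteq> V \<and>
      (\<forall>i<5. \<forall>j<5. E (c i) (c j) \<longleftrightarrow> cyc5 i j)"

definition nbrC :: "('a \<Rightarrow> 'a \<Rightarrow> bool) \<Rightarrow> (nat \<Rightarrow> 'a) \<Rightarrow> 'a \<Rightarrow> nat set" where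
  "nbrC E c v = {i. i < 5 \<and> E v (c i)}"

definition Rset :: "'a set \<Rightarrow> ('a \<Rightarrow> 'a \<Rightarrow> bool) \<Rightarrow> (nat \<Rightarrow> 'a) \<Rightarrow> 'a set" where
  "Rset V E c = {v \<in> V - c ` {..<5}. nbrC E c v = {}}"

definition Xset :: "'a set \<Rightarrow> ('a \<Rightarrow> 'a \<Rightarrow> bool) \<Rightarrow> (nat \<Rightarrow> 'a) \<Rightarrow> nat \<Rightarrow> 'a set" where
  "Xset V E c j = {v \<in> V - c ` {..<5}. nbrC E c v = {j mod 5, (j + 1) mod 5}}"

end

theory Submission
  imports Defs
begin

text \<open>Two non-adjacent vertices of \<open>X\<^sub>i\<close> would form a claw with \<open>c i\<close> and \<open>c (i - 1)\<close>, so
  \<open>X\<^sub>i\<close> is a clique. A vertex \<open>r \<in> R\<close> is adjacent to every \<open>x \<in> X\<^sub>i\<close>, since otherwise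
  \<open>r, x, c (i + 2), c (i - 1)\<close> would be independent. So three vertices of \<open>X\<^sub>i\<close> form a
  triangle joined completely to both \<open>r\<close> and \<open>c i\<close>, which are non-adjacent: an induced
  \<open>K\<^sub>5 - e\<close>.\<close>

lemma has_induced_listI:
  assumes "distinct xs" "set xs \<subseteq> V"
    and "\<forall>i<length xs. \<forall>j<length xs. E (xs ! i) (xs ! j) \<longleftrightarrow> H i j"
  shows "has_induced V E (length xs) H"
  unfolding has_induced_def
proof (intro exI conjI)
  show "inj_on ((!) xs) {..<length xs}"
    using assms(1) by (auto simp: inj_on_def distinct_conv_nth)
  show "(!) xs ` {..<length xs} \<subseteq> V"
    using assms(2) by (auto simp: set_conv_nth)
qed (use assms(3) in blast)

lemma graph_sym: "graph V E \<Longrightarrow> E u v \<Longrightarrow> E v u"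
  and graph_irrefl: "graph V E \<Longrightarrow> \<not> E v v"
  by (auto simp: graph_def)

lemma claw_free_nbrs_adjacent:
  assumes G: "graph V E" and free: "\<not> has_induced V E 4 claw"
    and V: "v \<in> V" "w \<in> V" "x \<in> V" "y \<in> V" and "distinct [w, x, y]"
    and E: "E v w" "E v x" "E v y" "\<not> E w x" "\<not> E w y"
  shows "E x y"
proof (rule ccontr)
  assume "\<not> E x y"
  have "has_induced V E (length [v, w, x, y]) claw"
    using E \<open>distinct [w, x, y]\<close> \<open>\<not> E x y\<close> graph_sym[OF G] graph_irrefl[OF G] V
    by (intro has_induced_listI) (auto simp: claw_def less_Suc_eq numeral_eq_Suc dest: graph_sym[OF G])
  with free show False by (simp add: numeral_eq_Suc)
qed

lemma fourK1_free_adjacent: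
  assumes G: "graph V E" and free: "\<not> has_induced V E 4 fourK1"
    and V: "r \<in> V" "x \<in> V" "s \<in> V" "t \<in> V" and "distinct [r, x, s, t]"
    and E: "\<not> E r s" "\<not> E r t" "\<not> E x s" "\<not> E x t" "\<not> E s t"
  shows "E r x"
proof (rule ccontr)
  assume "\<not> E r x"
  have "has_induced V E (length [r, x, s, t]) fourK1"
    using E \<open>distinct [r, x, s, t]\<close> \<open>\<not> E r x\<close> V graph_irrefl[OF G]
    by (intro has_induced_listI) (auto simp: fourK1_def less_Suc_eq numeral_eq_Suc dest: graph_sym[OF G])
  with free show False by (simp add: numeral_eq_Suc)
qed

lemma k5e_free_no_common_triangle:
  assumes G: "graph V E" and free: "\<not> has_induced V E 5 k5e"
    and V: "r \<in> V" "u \<in> V" "a \<in> V" "b \<in> V" "d \<in> V" and "r \<noteq> u" "\<not> E r u"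
    and E: "E r a" "E r b" "E r d" "E u a" "E u b" "E u d" "E a b" "E a d" "E b d"
  shows False
proof -
  have "distinct [r, u, a, b, d]"
    using E \<open>r \<noteq> u\<close> graph_irrefl[OF G] by auto
  then have "has_induced V E (length [r, u, a, b, d]) k5e"
    using E \<open>\<not> E r u\<close> V graph_irrefl[OF G]
    by (intro has_induced_listI)
      (auto simp: k5e_def doubleton_eq_iff less_Suc_eq numeral_eq_Suc dest: graph_sym[OF G])
  with free show False by (simp add: numeral_eq_Suc)
qed

lemma less_5_cases:
  assumes "(i::nat) < 5"
  obtains "i = 0" | "i = 1" | "i = 2" | "i = 3" | "i = 4"
  using assms by fastforce

lemma induced_C5_at:
  assumes "induced_C5 V E c" "i < 5"
  shows "c i \<in> V" "c ((i + 2) mod 5) \<in> V" "c ((i + 4) mod 5) \<in> V"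
    and "E (c i) (c ((i + 4) mod 5))" "\<not> E (c ((i + 2) mod 5)) (c ((i + 4) mod 5))"
    and "c ((i + 2) mod 5) \<noteq> c ((i + 4) mod 5)"
proof -
  from assms(1) have V: "\<And>k. k < 5 \<Longrightarrow> c k \<in> V"
    and inj: "\<And>j k. j < 5 \<Longrightarrow> k < 5 \<Longrightarrow> c j = c k \<longleftrightarrow> j = k"
    and E: "\<And>j k. j < 5 \<Longrightarrow> k < 5 \<Longrightarrow> E (c j) (c k) \<longleftrightarrow> cyc5 j k"
    by (auto simp: induced_C5_def inj_on_eq_iff)
  show "c i \<in> V" "c ((i + 2) mod 5) \<in> V" "c ((i + 4) mod 5) \<in> V"
    using V \<open>i < 5\<close> by simp_all
  show "E (c i) (c ((i + 4) mod 5))" "\<not> E (c ((i + 2) mod 5)) (c ((i + 4) mod 5))"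
    and "c ((i + 2) mod 5) \<noteq> c ((i + 4) mod 5)"
    using \<open>i < 5\<close> by (cases rule: less_5_cases; simp add: E inj cyc5_def)+
qed

lemma Xset_adjacency:
  assumes "x \<in> Xset V E c i" "i < 5"
  shows "x \<in> V" "x \<notin> c ` {..<5}" "E x (c i)"
    and "\<not> E x (c ((i + 2) mod 5))" "\<not> E x (c ((i + 4) mod 5))"
proof -
  from assms(1) have "x \<in> V" "x \<notin> c ` {..<5}"
    and nbrs: "nbrC E c x = {i mod 5, (i + 1) mod 5}"
    by (auto simp: Xset_def)
  then show "x \<in> V" "x \<notin> c ` {..<5}" by simp_all
  have "i \<in> nbrC E c x" "(i + 2) mod 5 \<notin> nbrC E c x" "(i + 4) mod 5 \<notin> nbrC E c x"
    unfolding nbrs using \<open>i < 5\<close> by (cases rule: less_5_cases; simp)+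
  then show "E x (c i)" "\<not> E x (c ((i + 2) mod 5))" "\<not> E x (c ((i + 4) mod 5))"
    by (simp_all add: nbrC_def)
qed

lemma Rset_nonadjacent:
  assumes "r \<in> Rset V E c"
  shows "r \<in> V" "r \<notin> c ` {..<5}" "\<And>k. k < 5 \<Longrightarrow> \<not> E r (c k)"
  using assms by (auto simp: Rset_def nbrC_def)

lemma Xset_clique:
  assumes G: "graph V E" and free: "\<not> has_induced V E 4 claw" and C5: "induced_C5 V E c"
    and "i < 5" and X: "x \<in> Xset V E c i" "y \<in> Xset V E c i" and "x \<noteq> y"
  shows "E x y"
proof (rule claw_free_nbrs_adjacent[OF G free, of "c i" "c ((i + 4) mod 5)"])
  note Xadj = Xset_adjacency[OF _ \<open>i < 5\<close>]
  show "distinct [c ((i + 4) mod 5), x, y]"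
    using Xadj(2)[OF X(1)] Xadj(2)[OF X(2)] \<open>x \<noteq> y\<close> by auto
  show "E (c i) x" "E (c i) y"
    using graph_sym[OF G Xadj(3)[OF X(1)]] graph_sym[OF G Xadj(3)[OF X(2)]] .
  show "\<not> E (c ((i + 4) mod 5)) x" "\<not> E (c ((i + 4) mod 5)) y"
    using Xadj(5)[OF X(1)] Xadj(5)[OF X(2)] graph_sym[OF G] by metis+
qed (use induced_C5_at[OF C5 \<open>i < 5\<close>] Xset_adjacency(1)[OF _ \<open>i < 5\<close>] X in auto)

lemma Rset_Xset_adjacent:
  assumes G: "graph V E" and free: "\<not> has_induced V E 4 fourK1" and C5: "induced_C5 V E c"
    and r: "r \<in> Rset V E c" and "i < 5" and X: "x \<in> Xset V E c i"
  shows "E r x"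
proof (rule fourK1_free_adjacent[OF G free, of r x "c ((i + 2) mod 5)" "c ((i + 4) mod 5)"])
  note cyc = induced_C5_at[OF C5 \<open>i < 5\<close>] and Xadj = Xset_adjacency[OF X \<open>i < 5\<close>]
    and R = Rset_nonadjacent[OF r]
  have "r \<noteq> x"
    using Xadj(3) R(3) \<open>i < 5\<close> by blast
  then show "distinct [r, x, c ((i + 2) mod 5), c ((i + 4) mod 5)]"
    using Xadj(2) R(2) cyc(6) by auto
  show "\<not> E r (c ((i + 2) mod 5))" "\<not> E r (c ((i + 4) mod 5))"
    using R(3) by simp_all
  show "\<not> E x (c ((i + 2) mod 5))" "\<not> E x (c ((i + 4) mod 5))"
    and "\<not> E (c ((i + 2) mod 5)) (c ((i + 4) mod 5))"
    using Xadj(4,5) cyc(5) by simp_all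
qed (use induced_C5_at[OF C5 \<open>i < 5\<close>] Xset_adjacency(1)[OF X \<open>i < 5\<close>]
       Rset_nonadjacent(1)[OF r] in simp_all)

lemma Xset_no_three:
  assumes G: "graph V E" and C: "in_class_C V E" and C5: "induced_C5 V E c"
    and r: "r \<in> Rset V E c" and "i < 5"
    and X: "a \<in> Xset V E c i" "b \<in> Xset V E c i" "d \<in> Xset V E c i"
    and "distinct [a, b, d]"
  shows False
proof -
  note Xadj = Xset_adjacency[OF _ \<open>i < 5\<close>] and R = Rset_nonadjacent[OF r]
  have free: "\<not> has_induced V E 4 claw" "\<not> has_induced V E 4 fourK1" "\<not> has_induced V E 5 k5e"
    using C by (simp_all add: in_class_C_def)
  show False
  proof (rule k5e_free_no_common_triangle[OF G free(3), of r "c i" a b d])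
    show "r \<noteq> c i" "\<not> E r (c i)"
      using R(2,3) \<open>i < 5\<close> by auto
    show "E (c i) a" "E (c i) b" "E (c i) d"
      using X by (simp_all add: Xadj(3) graph_sym[OF G])
    show "E a b" "E a d" "E b d"
      using Xset_clique[OF G free(1) C5 \<open>i < 5\<close>] X \<open>distinct [a, b, d]\<close> by simp_all
    show "E r a" "E r b" "E r d"
      using Rset_Xset_adjacent[OF G free(2) C5 r \<open>i < 5\<close>] X by simp_all
  qed (use X Xadj(1) induced_C5_at(1)[OF C5 \<open>i < 5\<close>] R(1) in simp_all)
qed

theorem claim14:
  fixes V :: "'a set" and E :: "'a \<Rightarrow> 'a \<Rightarrow> bool" and c :: "nat \<Rightarrow> 'a"
  assumes "graph V E" and "connected_graph V E" and "in_class_C V E"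
    and "induced_C5 V E c"
    and "Rset V E c \<noteq> {}"
  shows "\<forall>i<5. card (Xset V E c i) \<le> 2"
proof (intro allI impI)
  fix i :: nat
  assume "i < 5"
  obtain r where r: "r \<in> Rset V E c"
    using assms(5) by blast
  show "card (Xset V E c i) \<le> 2"
  proof (rule ccontr)
    assume "\<not> card (Xset V E c i) \<le> 2"
    then have "3 \<le> card (Xset V E c i)"
      by simp
    then obtain T where "T \<subseteq> Xset V E c i" "card T = 3"
      by (rule obtain_subset_with_card_n)
    then obtain a b d where "a \<in> Xset V E c i" "b \<in> Xset V E c i" "d \<in> Xset V E c i"
      "distinct [a, b, d]"
      by (auto simp: card_3_iff)
    then show False
      using Xset_no_three[OF assms(1,3,4) r \<open>i < 5\<close>] by blast
  qed
qed

end
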